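(* Let $M$ be a nearly finitary matroid that is not $k$-nearly finitary for any $k\in\mathbb{N}$, and let $N$ be a nearly finitary matroid whose ground set $E(N)$ is disjoint from $E(M)$. Then $M\vee N$ is a nearly finitary matroid that is not $k$-nearly finitary for any $k\in\mathbb{N}$.
   Context: Matroids (possibly infinite): $\emptyset$ independent; subsets of independent sets independent; if $B$ is maximal independent and $A$ non-maximal independent, then $A\cup\{b\}$ is independent for some $b\in B\setminus A$; for independent $A\subseteq X\subseteq E$ there is a maximal independent $S$ with $A\subseteq S\subseteq X$. Bases are maximal independent sets. The union $M\vee N$ has ground set $E(M)\cup E(N)$ and independent sets $\{S\cup T: S\text{ independent in }M,\ T\text{ independent in }N\}$. The finitarization $M^{\mathrm{fin}}$ has as independent sets those sets all of whose finite subsets are independent in $M$. $M$ is nearly finitary if $F\setminus B$ is finite whenever a base $F$ of $M^{\mathrm{fin}}$ contains a base $B$ of $M$; $k$-nearly finitary if $|F\setminus B|\le k$ for all such pairs. *)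

theory Defs
  imports Main
begin

record 'a matroid =
  gnd :: "'a set"
  indep :: "'a set set"

definition maximal_in :: "'a set set \<Rightarrow> 'a set \<Rightarrow> bool" where
  "maximal_in F S \<longleftrightarrow> S \<in> F \<and> (\<forall>T\<in>F. S \<subseteq> T \<longrightarrow> T = S)"

definition base :: "'a matroid \<Rightarrow> 'a set \<Rightarrow> bool" where
  "base M B \<longleftrightarrow> maximal_in (indep M) B"

definition is_matroid :: "'a matroid \<Rightarrow> bool" where
  "is_matroid M \<longleftrightarrow>
     (\<forall>A\<in>indep M. A \<subseteq> gnd M) \<and>
     {} \<in> indep M \<and>
     (\<forall>A B. B \<in> indep M \<longrightarrow> A \<subseteq> B \<longrightarrow> A \<in> indep M) \<and>
     (\<forall>A B. base M B \<longrightarrow> A \<in> indep M \<longrightarrow> \<not> base M A \<longrightarrow>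
        (\<exists>b\<in>B - A. insert b A \<in> indep M)) \<and>
     (\<forall>A X. A \<in> indep M \<longrightarrow> A \<subseteq> X \<longrightarrow> X \<subseteq> gnd M \<longrightarrow>
        (\<exists>S. maximal_in {S'. S' \<in> indep M \<and> A \<subseteq> S' \<and> S' \<subseteq> X} S))"

definition matroid_union :: "'a matroid \<Rightarrow> 'a matroid \<Rightarrow> 'a matroid" where
  "matroid_union M N =
     \<lparr> gnd = gnd M \<union> gnd N,
       indep = {S \<union> T | S T. S \<in> indep M \<and> T \<in> indep N} \<rparr>"

definition finitarization :: "'a matroid \<Rightarrow> 'a matroid" where
  "finitarization M =
     \<lparr> gnd = gnd M,
       indep = {I. I \<subseteq> gnd M \<and> (\<forall>J. J \<subseteq> I \<longrightarrow> finite J \<longrightarrow> J \<in> indep M)} \<rparr>"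

definition nearly_finitary :: "'a matroid \<Rightarrow> bool" where
  "nearly_finitary M \<longleftrightarrow>
     (\<forall>F B. base (finitarization M) F \<longrightarrow> base M B \<longrightarrow> B \<subseteq> F \<longrightarrow> finite (F - B))"

definition k_nearly_finitary :: "nat \<Rightarrow> 'a matroid \<Rightarrow> bool" where
  "k_nearly_finitary k M \<longleftrightarrow>
     (\<forall>F B. base (finitarization M) F \<longrightarrow> base M B \<longrightarrow> B \<subseteq> F \<longrightarrow>
        finite (F - B) \<and> card (F - B) \<le> k)"

end

theory Submission
  imports Defs
begin

text \<open>For disjoint ground sets, a set is independent in \<open>M \<or> N\<close> iff its traces on
  \<open>E(M)\<close> and \<open>E(N)\<close> are independent in \<open>M\<close> and \<open>N\<close>; finitarization commutes with this
  decomposition, and maximality can be checked on each trace separately. Hence the bases of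
  \<open>M \<or> N\<close> and of its finitarization are exactly the unions of bases of the components, and
  \<open>F - B\<close> splits as \<open>(F\<^sub>M - B\<^sub>M) \<union> (F\<^sub>N - B\<^sub>N)\<close>. This is finite when both parts are,
  and padding a bad pair \<open>(F\<^sub>M, B\<^sub>M)\<close> of \<open>M\<close> with a base of \<open>N\<close> and a finitarization base
  containing it yields an equally bad pair of \<open>M \<or> N\<close>.\<close>

definition sum_family :: "'a set \<Rightarrow> 'a set \<Rightarrow> 'a set set \<Rightarrow> 'a set set \<Rightarrow> 'a set set" where
  "sum_family E1 E2 P Q = {I. I \<subseteq> E1 \<union> E2 \<and> I \<inter> E1 \<in> P \<and> I \<inter> E2 \<in> Q}"

lemma sum_family_commute: "sum_family E1 E2 P Q = sum_family E2 E1 Q P"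
  unfolding sum_family_def by blast

lemma union_family_eq_sum_family:
  assumes "E1 \<inter> E2 = {}" "P \<subseteq> Pow E1" "Q \<subseteq> Pow E2"
  shows "{S \<union> T | S T. S \<in> P \<and> T \<in> Q} = sum_family E1 E2 P Q"
proof (intro set_eqI iffI)
  fix I assume "I \<in> {S \<union> T | S T. S \<in> P \<and> T \<in> Q}"
  then obtain S T where "I = S \<union> T" "S \<in> P" "T \<in> Q" by blast
  moreover from this have "I \<inter> E1 = S" "I \<inter> E2 = T" using assms by blast+
  ultimately show "I \<in> sum_family E1 E2 P Q" unfolding sum_family_def using assms by auto
next
  fix I assume "I \<in> sum_family E1 E2 P Q"
  then have "I = (I \<inter> E1) \<union> (I \<inter> E2)" "I \<inter> E1 \<in> P" "I \<inter> E2 \<in> Q"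
    unfolding sum_family_def by auto
  then show "I \<in> {S \<union> T | S T. S \<in> P \<and> T \<in> Q}" by blast
qed

lemma maximal_in_sum_family_fst:
  assumes "E1 \<inter> E2 = {}" "P \<subseteq> Pow E1" and B: "maximal_in (sum_family E1 E2 P Q) B"
  shows "maximal_in P (B \<inter> E1)"
  unfolding maximal_in_def
proof (intro conjI ballI impI)
  show "B \<inter> E1 \<in> P" using B unfolding maximal_in_def sum_family_def by blast
  fix T assume T: "T \<in> P" "B \<inter> E1 \<subseteq> T"
  then have "T \<subseteq> E1" using assms(2) by blast
  then have traces: "(T \<union> (B \<inter> E2)) \<inter> E1 = T" "(T \<union> (B \<inter> E2)) \<inter> E2 = B \<inter> E2"
    using assms(1) by blast+
  then have "T \<union> (B \<inter> E2) \<in> sum_family E1 E2 P Q" "B \<subseteq> T \<union> (B \<inter> E2)"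
    using T \<open>T \<subseteq> E1\<close> B unfolding maximal_in_def sum_family_def by auto
  then have "T \<union> (B \<inter> E2) = B" using B unfolding maximal_in_def by blast
  then show "T = B \<inter> E1" using traces(1) by simp
qed

lemma maximal_in_sum_family:
  assumes "E1 \<inter> E2 = {}" "P \<subseteq> Pow E1" "Q \<subseteq> Pow E2"
  shows "maximal_in (sum_family E1 E2 P Q) B \<longleftrightarrow>
    B \<subseteq> E1 \<union> E2 \<and> maximal_in P (B \<inter> E1) \<and> maximal_in Q (B \<inter> E2)"
proof
  assume B: "maximal_in (sum_family E1 E2 P Q) B"
  have "B \<subseteq> E1 \<union> E2" using B unfolding maximal_in_def sum_family_def by blast
  moreover have "maximal_in P (B \<inter> E1)" using maximal_in_sum_family_fst assms(1,2) B .
  moreover have "E2 \<inter> E1 = {}" using assms(1) by blast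
  then have "maximal_in Q (B \<inter> E2)"
    using maximal_in_sum_family_fst assms(3) B unfolding sum_family_commute[of E1 E2 P Q] by blast
  ultimately show "B \<subseteq> E1 \<union> E2 \<and> maximal_in P (B \<inter> E1) \<and> maximal_in Q (B \<inter> E2)" by blast
next
  assume "B \<subseteq> E1 \<union> E2 \<and> maximal_in P (B \<inter> E1) \<and> maximal_in Q (B \<inter> E2)"
  then have B: "B \<subseteq> E1 \<union> E2" "maximal_in P (B \<inter> E1)" "maximal_in Q (B \<inter> E2)" by blast+
  show "maximal_in (sum_family E1 E2 P Q) B"
    unfolding maximal_in_def
  proof (intro conjI ballI impI)
    show "B \<in> sum_family E1 E2 P Q" using B unfolding maximal_in_def sum_family_def by blast
    fix T assume T: "T \<in> sum_family E1 E2 P Q" "B \<subseteq> T"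
    then have "T \<inter> E1 \<in> P" "T \<inter> E2 \<in> Q" "B \<inter> E1 \<subseteq> T \<inter> E1" "B \<inter> E2 \<subseteq> T \<inter> E2"
      unfolding sum_family_def by auto
    then have "T \<inter> E1 = B \<inter> E1" "T \<inter> E2 = B \<inter> E2"
      using B(2,3) unfolding maximal_in_def by blast+
    then show "T = B" using B(1) T unfolding sum_family_def by blast
  qed
qed

lemma insert_mem_sum_family:
  assumes "E1 \<inter> E2 = {}" "x \<in> E1" "A \<in> sum_family E1 E2 P Q" "insert x (A \<inter> E1) \<in> P"
  shows "insert x A \<in> sum_family E1 E2 P Q"
proof -
  have "insert x A \<inter> E1 = insert x (A \<inter> E1)" "insert x A \<inter> E2 = A \<inter> E2" using assms(1,2) by auto
  then show ?thesis using assms(2-4) unfolding sum_family_def by auto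
qed

lemma indep_subset_gnd: "is_matroid M \<Longrightarrow> indep M \<subseteq> Pow (gnd M)"
  unfolding is_matroid_def by auto

lemma empty_indep: "is_matroid M \<Longrightarrow> {} \<in> indep M"
  unfolding is_matroid_def by blast

lemma indep_subset: "is_matroid M \<Longrightarrow> B \<in> indep M \<Longrightarrow> A \<subseteq> B \<Longrightarrow> A \<in> indep M"
  unfolding is_matroid_def by blast

lemma indep_augment:
  "is_matroid M \<Longrightarrow> base M B \<Longrightarrow> A \<in> indep M \<Longrightarrow> \<not> base M A \<Longrightarrow>
    \<exists>b\<in>B - A. insert b A \<in> indep M"
  unfolding is_matroid_def by blast

lemma indep_extends_maximal:
  "is_matroid M \<Longrightarrow> A \<in> indep M \<Longrightarrow> A \<subseteq> X \<Longrightarrow> X \<subseteq> gnd M \<Longrightarrow>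
    \<exists>S. maximal_in {S'. S' \<in> indep M \<and> A \<subseteq> S' \<and> S' \<subseteq> X} S"
  unfolding is_matroid_def by blast

lemma base_exists:
  assumes "is_matroid M"
  obtains B where "base M B"
proof -
  obtain B where B: "maximal_in {S. S \<in> indep M \<and> {} \<subseteq> S \<and> S \<subseteq> gnd M} B"
    using indep_extends_maximal[OF assms empty_indep[OF assms]] by blast
  have "{S. S \<in> indep M \<and> {} \<subseteq> S \<and> S \<subseteq> gnd M} = indep M"
    using indep_subset_gnd[OF assms] by blast
  with B show thesis using that unfolding base_def by simp
qed

lemma gnd_matroid_union [simp]: "gnd (matroid_union M N) = gnd M \<union> gnd N"
  by (simp add: matroid_union_def)

lemma indep_matroid_union:
  assumes "indep M \<subseteq> Pow (gnd M)" "indep N \<subseteq> Pow (gnd N)" "gnd M \<inter> gnd N = {}"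
  shows "indep (matroid_union M N) = sum_family (gnd M) (gnd N) (indep M) (indep N)"
  using union_family_eq_sum_family[OF assms(3,1,2)] by (simp add: matroid_union_def)

lemma base_matroid_union:
  assumes "indep M \<subseteq> Pow (gnd M)" "indep N \<subseteq> Pow (gnd N)" "gnd M \<inter> gnd N = {}"
  shows "base (matroid_union M N) B \<longleftrightarrow>
    B \<subseteq> gnd M \<union> gnd N \<and> base M (B \<inter> gnd M) \<and> base N (B \<inter> gnd N)"
  unfolding base_def indep_matroid_union[OF assms] using maximal_in_sum_family[OF assms(3,1,2)] .

lemma gnd_finitarization [simp]: "gnd (finitarization M) = gnd M"
  by (simp add: finitarization_def)

lemma indep_finitarization_iff:
  "I \<in> indep (finitarization M) \<longleftrightarrow> I \<subseteq> gnd M \<and> (\<forall>J. J \<subseteq> I \<longrightarrow> finite J \<longrightarrow> J \<in> indep M)"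
  by (simp add: finitarization_def)

lemma indep_finitarization_subset_gnd: "indep (finitarization M) \<subseteq> Pow (gnd M)"
  by (auto simp: indep_finitarization_iff)

lemma indep_imp_indep_finitarization:
  assumes "is_matroid M" "I \<in> indep M"
  shows "I \<in> indep (finitarization M)"
  unfolding indep_finitarization_iff
  using indep_subset_gnd[OF assms(1)] assms(2) indep_subset[OF assms(1,2)] by blast

lemma finitarization_matroid_union:
  assumes "indep M \<subseteq> Pow (gnd M)" "indep N \<subseteq> Pow (gnd N)" and disj: "gnd M \<inter> gnd N = {}"
  shows "finitarization (matroid_union M N) = matroid_union (finitarization M) (finitarization N)"
proof (rule matroid.equality)
  let ?S = "sum_family (gnd M) (gnd N) (indep M) (indep N)"
  have "I \<in> indep (finitarization (matroid_union M N)) \<longleftrightarrow>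
      I \<in> sum_family (gnd M) (gnd N) (indep (finitarization M)) (indep (finitarization N))" for I
  proof
    assume "I \<in> indep (finitarization (matroid_union M N))"
    then have I: "I \<subseteq> gnd M \<union> gnd N" "\<And>J. J \<subseteq> I \<Longrightarrow> finite J \<Longrightarrow> J \<in> ?S"
      unfolding indep_finitarization_iff indep_matroid_union[OF assms] by auto
    have "J \<in> indep M" if "J \<subseteq> I \<inter> gnd M" "finite J" for J
      using I(2)[of J] that unfolding sum_family_def by (simp add: Int_absorb2)
    moreover have "J \<in> indep N" if "J \<subseteq> I \<inter> gnd N" "finite J" for J
      using I(2)[of J] that unfolding sum_family_def by (simp add: Int_absorb2)
    ultimately show "I \<in> sum_family (gnd M) (gnd N) (indep (finitarization M)) (indep (finitarization N))"
      using I(1) unfolding sum_family_def indep_finitarization_iff by blast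
  next
    assume "I \<in> sum_family (gnd M) (gnd N) (indep (finitarization M)) (indep (finitarization N))"
    then have I: "I \<subseteq> gnd M \<union> gnd N"
        "\<And>J. J \<subseteq> I \<inter> gnd M \<Longrightarrow> finite J \<Longrightarrow> J \<in> indep M"
        "\<And>J. J \<subseteq> I \<inter> gnd N \<Longrightarrow> finite J \<Longrightarrow> J \<in> indep N"
      unfolding sum_family_def indep_finitarization_iff by auto
    have "J \<in> ?S" if "J \<subseteq> I" "finite J" for J
      using that I(1) I(2)[of "J \<inter> gnd M"] I(3)[of "J \<inter> gnd N"] unfolding sum_family_def by auto
    then show "I \<in> indep (finitarization (matroid_union M N))"
      unfolding indep_finitarization_iff indep_matroid_union[OF assms] using I(1) by simp
  qed
  then show "indep (finitarization (matroid_union M N)) =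
      indep (matroid_union (finitarization M) (finitarization N))"
    using indep_matroid_union[of "finitarization M" "finitarization N"]
      indep_finitarization_subset_gnd disj by auto
qed (simp_all add: finitarization_def matroid_union_def)

lemma base_finitarization_matroid_union:
  assumes "indep M \<subseteq> Pow (gnd M)" "indep N \<subseteq> Pow (gnd N)" "gnd M \<inter> gnd N = {}"
  shows "base (finitarization (matroid_union M N)) B \<longleftrightarrow> B \<subseteq> gnd M \<union> gnd N \<and>
    base (finitarization M) (B \<inter> gnd M) \<and> base (finitarization N) (B \<inter> gnd N)"
  using base_matroid_union[of "finitarization M" "finitarization N"] assms(3)
  by (simp add: finitarization_matroid_union[OF assms] indep_finitarization_subset_gnd)

lemma augment_matroid_union:
  assumes M: "is_matroid M" and N: "is_matroid N" and disj: "gnd M \<inter> gnd N = {}"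
    and B: "base (matroid_union M N) B" and A: "A \<in> indep (matroid_union M N)"
    and not_base: "\<not> base (matroid_union M N) A"
  shows "\<exists>b\<in>B - A. insert b A \<in> indep (matroid_union M N)"
proof -
  note indep_U = indep_matroid_union[OF indep_subset_gnd[OF M] indep_subset_gnd[OF N] disj]
  note base_U = base_matroid_union[OF indep_subset_gnd[OF M] indep_subset_gnd[OF N] disj]
  have A_sum: "A \<in> sum_family (gnd M) (gnd N) (indep M) (indep N)" using A indep_U by simp
  have "\<not> base M (A \<inter> gnd M) \<or> \<not> base N (A \<inter> gnd N)"
    using not_base A_sum unfolding base_U sum_family_def by blast
  then show ?thesis
  proof
    assume "\<not> base M (A \<inter> gnd M)"
    then obtain b where "b \<in> B \<inter> gnd M - A \<inter> gnd M" "insert b (A \<inter> gnd M) \<in> indep M"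
      using indep_augment[OF M] B A_sum unfolding base_U sum_family_def by blast
    then have "b \<in> B - A" "insert b A \<in> indep (matroid_union M N)"
      using insert_mem_sum_family[OF disj _ A_sum] indep_U by auto
    then show ?thesis by blast
  next
    assume "\<not> base N (A \<inter> gnd N)"
    then obtain b where "b \<in> B \<inter> gnd N - A \<inter> gnd N" "insert b (A \<inter> gnd N) \<in> indep N"
      using indep_augment[OF N] B A_sum unfolding base_U sum_family_def by blast
    moreover have "gnd N \<inter> gnd M = {}" using disj by blast
    moreover have "A \<in> sum_family (gnd N) (gnd M) (indep N) (indep M)"
      using A_sum by (simp only: sum_family_commute[of "gnd N"])
    ultimately have "b \<in> B - A" "insert b A \<in> indep (matroid_union M N)"
      using insert_mem_sum_family[of "gnd N" "gnd M" _ A] indep_U sum_family_commute[of "gnd N"] by auto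
    then show ?thesis by blast
  qed
qed

lemma extends_maximal_matroid_union:
  assumes M: "is_matroid M" and N: "is_matroid N" and disj: "gnd M \<inter> gnd N = {}"
    and A: "A \<in> indep (matroid_union M N)" and "A \<subseteq> X" "X \<subseteq> gnd M \<union> gnd N"
  shows "\<exists>S. maximal_in {S'. S' \<in> indep (matroid_union M N) \<and> A \<subseteq> S' \<and> S' \<subseteq> X} S"
proof -
  note indep_U = indep_matroid_union[OF indep_subset_gnd[OF M] indep_subset_gnd[OF N] disj]
  define P where "P = {S'. S' \<in> indep M \<and> A \<inter> gnd M \<subseteq> S' \<and> S' \<subseteq> X \<inter> gnd M}"
  define Q where "Q = {S'. S' \<in> indep N \<and> A \<inter> gnd N \<subseteq> S' \<and> S' \<subseteq> X \<inter> gnd N}"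
  have A_sum: "A \<in> sum_family (gnd M) (gnd N) (indep M) (indep N)" using A indep_U by simp
  obtain S1 where S1: "maximal_in P S1"
    using indep_extends_maximal[OF M, of "A \<inter> gnd M" "X \<inter> gnd M"] A_sum \<open>A \<subseteq> X\<close>
    unfolding P_def sum_family_def by blast
  obtain S2 where S2: "maximal_in Q S2"
    using indep_extends_maximal[OF N, of "A \<inter> gnd N" "X \<inter> gnd N"] A_sum \<open>A \<subseteq> X\<close>
    unfolding Q_def sum_family_def by blast
  have "{S'. S' \<in> indep (matroid_union M N) \<and> A \<subseteq> S' \<and> S' \<subseteq> X} = sum_family (gnd M) (gnd N) P Q"
    using A_sum \<open>X \<subseteq> gnd M \<union> gnd N\<close> unfolding indep_U P_def Q_def sum_family_def by blast
  moreover have "P \<subseteq> Pow (gnd M)" "Q \<subseteq> Pow (gnd N)" unfolding P_def Q_def by auto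
  moreover have "S1 \<subseteq> gnd M" "S2 \<subseteq> gnd N" using S1 S2 unfolding maximal_in_def P_def Q_def by auto
  then have "(S1 \<union> S2) \<inter> gnd M = S1" "(S1 \<union> S2) \<inter> gnd N = S2" using disj by blast+
  ultimately have "maximal_in {S'. S' \<in> indep (matroid_union M N) \<and> A \<subseteq> S' \<and> S' \<subseteq> X} (S1 \<union> S2)"
    using maximal_in_sum_family[OF disj] S1 S2 \<open>S1 \<subseteq> gnd M\<close> \<open>S2 \<subseteq> gnd N\<close> by auto
  then show ?thesis by blast
qed

lemma is_matroid_matroid_union:
  assumes M: "is_matroid M" and N: "is_matroid N" and disj: "gnd M \<inter> gnd N = {}"
  shows "is_matroid (matroid_union M N)"
proof -
  note indep_U = indep_matroid_union[OF indep_subset_gnd[OF M] indep_subset_gnd[OF N] disj]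
  have "\<forall>A\<in>indep (matroid_union M N). A \<subseteq> gnd (matroid_union M N)"
    unfolding indep_U sum_family_def by auto
  moreover have "{} \<in> indep (matroid_union M N)"
    using empty_indep[OF M] empty_indep[OF N] unfolding indep_U sum_family_def by simp
  moreover have "\<forall>A B. B \<in> indep (matroid_union M N) \<longrightarrow> A \<subseteq> B \<longrightarrow> A \<in> indep (matroid_union M N)"
  proof (intro allI impI)
    fix A B assume "B \<in> indep (matroid_union M N)" "A \<subseteq> B"
    then have "A \<subseteq> gnd M \<union> gnd N" "A \<inter> gnd M \<in> indep M" "A \<inter> gnd N \<in> indep N"
      using indep_subset[OF M, of "B \<inter> gnd M" "A \<inter> gnd M"]
        indep_subset[OF N, of "B \<inter> gnd N" "A \<inter> gnd N"]
      unfolding indep_U sum_family_def by auto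
    then show "A \<in> indep (matroid_union M N)" unfolding indep_U sum_family_def by blast
  qed
  ultimately show ?thesis
    using augment_matroid_union[OF M N disj] extends_maximal_matroid_union[OF M N disj]
    unfolding is_matroid_def gnd_matroid_union by blast
qed

lemma nearly_finitary_matroid_union:
  assumes M: "is_matroid M" and N: "is_matroid N" and disj: "gnd M \<inter> gnd N = {}"
    and "nearly_finitary M" "nearly_finitary N"
  shows "nearly_finitary (matroid_union M N)"
  unfolding nearly_finitary_def
proof (intro allI impI)
  note base_U = base_matroid_union[OF indep_subset_gnd[OF M] indep_subset_gnd[OF N] disj]
  note base_fin_U =
    base_finitarization_matroid_union[OF indep_subset_gnd[OF M] indep_subset_gnd[OF N] disj]
  fix F B assume F: "base (finitarization (matroid_union M N)) F"
    and B: "base (matroid_union M N) B" and "B \<subseteq> F"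
  then have "B \<inter> gnd M \<subseteq> F \<inter> gnd M" "B \<inter> gnd N \<subseteq> F \<inter> gnd N" by blast+
  then have "finite (F \<inter> gnd M - B \<inter> gnd M)" "finite (F \<inter> gnd N - B \<inter> gnd N)"
    using assms(4,5) F B unfolding nearly_finitary_def base_U base_fin_U by blast+
  moreover have "F - B = (F \<inter> gnd M - B \<inter> gnd M) \<union> (F \<inter> gnd N - B \<inter> gnd N)"
    using F unfolding base_fin_U by blast
  ultimately show "finite (F - B)" by simp
qed

text \<open>Independence in the finitarization has finite character, so by Zorn's lemma every
  independent set extends to a base.\<close>

lemma finitarization_base_extends:
  assumes I: "I \<in> indep (finitarization M)"
  obtains F where "base (finitarization M) F" "I \<subseteq> F"
proof -
  let ?A = "{F \<in> indep (finitarization M). I \<subseteq> F}"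
  have "\<Union>C \<in> ?A" if "C \<noteq> {}" and chain: "subset.chain ?A C" for C
  proof -
    have "J \<in> indep M" if "J \<subseteq> \<Union>C" "finite J" for J
    proof -
      obtain F where "F \<in> C" "J \<subseteq> F"
        using finite_subset_Union_chain[OF \<open>finite J\<close> \<open>J \<subseteq> \<Union>C\<close> \<open>C \<noteq> {}\<close> chain] by blast
      then show ?thesis
        using chain \<open>finite J\<close> unfolding subset.chain_def indep_finitarization_iff by blast
    qed
    moreover have "C \<subseteq> ?A" using chain unfolding subset.chain_def by blast
    then have "\<Union>C \<subseteq> gnd M" "I \<subseteq> \<Union>C"
      using \<open>C \<noteq> {}\<close> unfolding indep_finitarization_iff by blast+
    ultimately show ?thesis unfolding indep_finitarization_iff by blast
  qed
  then obtain F where "F \<in> ?A" "\<forall>X\<in>?A. F \<subseteq> X \<longrightarrow> X = F"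
    using subset_Zorn_nonempty[of ?A] I by blast
  then have "base (finitarization M) F" "I \<subseteq> F" unfolding base_def maximal_in_def by blast+
  then show thesis by (rule that)
qed

lemma k_nearly_finitary_of_matroid_union:
  assumes M: "is_matroid M" and N: "is_matroid N" and disj: "gnd M \<inter> gnd N = {}"
    and "k_nearly_finitary k (matroid_union M N)"
  shows "k_nearly_finitary k M"
  unfolding k_nearly_finitary_def
proof (intro allI impI)
  note base_U = base_matroid_union[OF indep_subset_gnd[OF M] indep_subset_gnd[OF N] disj]
  note base_fin_U =
    base_finitarization_matroid_union[OF indep_subset_gnd[OF M] indep_subset_gnd[OF N] disj]
  fix F B assume F: "base (finitarization M) F" and B: "base M B" and "B \<subseteq> F"
  obtain B' where B': "base N B'" using base_exists[OF N] .
  then obtain F' where F': "base (finitarization N) F'" "B' \<subseteq> F'"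
    using finitarization_base_extends indep_imp_indep_finitarization[OF N]
    unfolding base_def maximal_in_def by metis
  have "F \<subseteq> gnd M" "F' \<subseteq> gnd N"
    using F F'(1) unfolding base_def maximal_in_def indep_finitarization_iff by blast+
  with \<open>B \<subseteq> F\<close> \<open>B' \<subseteq> F'\<close> disj have traces:
      "(B \<union> B') \<inter> gnd M = B" "(B \<union> B') \<inter> gnd N = B'"
      "(F \<union> F') \<inter> gnd M = F" "(F \<union> F') \<inter> gnd N = F'"
      "F - B \<subseteq> (F \<union> F') - (B \<union> B')"
    by blast+
  have "base (matroid_union M N) (B \<union> B')" "base (finitarization (matroid_union M N)) (F \<union> F')"
    using B B' F F' \<open>F \<subseteq> gnd M\<close> \<open>F' \<subseteq> gnd N\<close> \<open>B \<subseteq> F\<close> \<open>B' \<subseteq> F'\<close>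
    unfolding base_U base_fin_U traces by blast+
  moreover have "B \<union> B' \<subseteq> F \<union> F'" using \<open>B \<subseteq> F\<close> \<open>B' \<subseteq> F'\<close> by blast
  ultimately have "finite ((F \<union> F') - (B \<union> B'))" "card ((F \<union> F') - (B \<union> B')) \<le> k"
    using assms(4) unfolding k_nearly_finitary_def by blast+
  then show "finite (F - B) \<and> card (F - B) \<le> k"
    using finite_subset[OF traces(5)] card_mono[OF _ traces(5)] by fastforce
qed

theorem theorem3p4p6:
  fixes M N :: "'a matroid"
  assumes "is_matroid M" and "nearly_finitary M"
    and "\<forall>k. \<not> k_nearly_finitary k M"
    and "is_matroid N" and "nearly_finitary N"
    and "gnd M \<inter> gnd N = {}"
  shows "is_matroid (matroid_union M N) \<and> nearly_finitary (matroid_union M N)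
    \<and> (\<forall>k. \<not> k_nearly_finitary k (matroid_union M N))"
proof (intro conjI allI notI)
  show "is_matroid (matroid_union M N)" using is_matroid_matroid_union assms(1,4,6) .
  show "nearly_finitary (matroid_union M N)" using nearly_finitary_matroid_union assms(1,4,6,2,5) .
  fix k assume "k_nearly_finitary k (matroid_union M N)"
  then show False using k_nearly_finitary_of_matroid_union assms(1,4,6,3) by blast
qed

end
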